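(* Let $d\ge 2$, let $\mu$ be a partition of $p$ with at most $d$ rows, let $\alpha_1,\ldots,\alpha_k$ be all the distinct partitions of $p-1$ obtained from $\mu$ by removing a single box, and let $B^{\mu\mu}$ be the $k\times k$ matrix with entries $b_{ij}=\frac{m_\mu}{d(d^2-1)}\Big(d\frac{m_\mu}{m_{\alpha_i}}\delta_{ij}-1\Big)$. Then $\det B^{\mu\mu}=0$ if and only if $d\,m_\mu=m_{\alpha_1}+m_{\alpha_2}+\cdots+m_{\alpha_k}$.
   Context: For a partition (Young diagram) $\lambda$ with at most $d$ rows, $m_\lambda$ denotes the number of semistandard Young tableaux of shape $\lambda$ with entries in $\{1,\ldots,d\}$ (equivalently, the multiplicity of the corresponding symmetric-group irrep in $(\mathbb{C}^d)^{\otimes|\lambda|}$). *)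

theory Defs
  imports "Jordan_Normal_Form.Determinant"
begin

definition is_partition :: "nat list \<Rightarrow> bool" where
  "is_partition lam \<longleftrightarrow> sorted_wrt (\<ge>) lam \<and> (\<forall>x\<in>set lam. 0 < x)"

text \<open>Young diagram: cells (row, column), 0-indexed.\<close>
definition young_diagram :: "nat list \<Rightarrow> (nat \<times> nat) set" where
  "young_diagram lam = {(i, j). i < length lam \<and> j < lam ! i}"

definition ssyt :: "nat \<Rightarrow> nat list \<Rightarrow> (nat \<times> nat \<Rightarrow> nat) set" where
  "ssyt d lam = {T.
     (\<forall>c \<in> young_diagram lam. 1 \<le> T c \<and> T c \<le> d) \<and>
     (\<forall>c. c \<notin> young_diagram lam \<longrightarrow> T c = 0) \<and>
     (\<forall>i j. (i, Suc j) \<in> young_diagram lam \<longrightarrow> T (i, j) \<le> T (i, Suc j)) \<and>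
     (\<forall>i j. (Suc i, j) \<in> young_diagram lam \<longrightarrow> T (i, j) < T (Suc i, j))}"

definition mult_m :: "nat \<Rightarrow> nat list \<Rightarrow> nat" where
  "mult_m d lam = card (ssyt d lam)"

definition box_removals :: "nat list \<Rightarrow> nat list set" where
  "box_removals \<mu> = {\<alpha>. is_partition \<alpha> \<and> young_diagram \<alpha> \<subseteq> young_diagram \<mu> \<and>
                        card (young_diagram \<mu> - young_diagram \<alpha>) = 1}"

end

theory Submission
  imports Defs
begin

text \<open>The matrix is \<open>c (D - J)\<close> with \<open>D = diag (a\<^sub>1, \<dots>, a\<^sub>k)\<close> and \<open>J\<close> the all-ones matrix.
  A kernel vector \<open>v\<close> satisfies \<open>a\<^sub>i v\<^sub>i = \<Sigma>\<^sub>j v\<^sub>j\<close>, so it is proportional to \<open>(1/a\<^sub>i)\<^sub>i\<close>, and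
  such a vector lies in the kernel iff \<open>\<Sigma>\<^sub>i 1/a\<^sub>i = 1\<close>. With \<open>a\<^sub>i = d m\<^sub>\<mu>/m\<^sub>\<alpha>\<^sub>i\<close> this is the
  stated condition; all multiplicities involved are positive because a partition with
  at most \<open>d\<close> rows has the semistandard filling that puts \<open>i + 1\<close> into row \<open>i\<close>, and
  removing a box never adds a row.\<close>

lemma scaled_diag_minus_ones_mult_vec_nth:
  fixes a :: "nat \<Rightarrow> 'a::comm_ring_1" and v :: "'a vec"
  assumes "v \<in> carrier_vec k" "i < k"
  shows "(mat k k (\<lambda>(i, j). c * (a i * (if i = j then 1 else 0) - 1)) *\<^sub>v v) $ i
     = c * (a i * v $ i - (\<Sum>j<k. v $ j))"
proof -
  have "(mat k k (\<lambda>(i, j). c * (a i * (if i = j then 1 else 0) - 1)) *\<^sub>v v) $ i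
      = (\<Sum>j<k. c * a i * (if i = j then v $ j else 0) - c * v $ j)"
    using assms by (auto simp: scalar_prod_def lessThan_atLeast0 algebra_simps intro!: sum.cong)
  also have "\<dots> = c * a i * v $ i - c * (\<Sum>j<k. v $ j)"
    using assms(2) by (simp add: sum_subtractf sum_distrib_left[symmetric] sum.delta)
  finally show ?thesis by (simp add: algebra_simps)
qed

lemma det_scaled_diag_minus_ones_eq_0_iff:
  fixes a :: "nat \<Rightarrow> 'a::field"
  assumes c: "c \<noteq> 0" and a: "\<And>i. i < k \<Longrightarrow> a i \<noteq> 0"
  shows "det (mat k k (\<lambda>(i, j). c * (a i * (if i = j then 1 else 0) - 1))) = 0
     \<longleftrightarrow> (\<Sum>i<k. 1 / a i) = 1"
proof -
  let ?A = "mat k k (\<lambda>(i, j). c * (a i * (if i = j then 1 else 0) - 1))"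
  have A: "?A \<in> carrier_mat k k" by simp
  show ?thesis unfolding det_0_iff_vec_prod_zero[OF A]
  proof
    assume "\<exists>v. v \<in> carrier_vec k \<and> v \<noteq> 0\<^sub>v k \<and> ?A *\<^sub>v v = 0\<^sub>v k"
    then obtain v where v: "v \<in> carrier_vec k" "v \<noteq> 0\<^sub>v k" "?A *\<^sub>v v = 0\<^sub>v k" by blast
    define s where "s = (\<Sum>j<k. v $ j)"
    have v_nth: "v $ i = s / a i" if "i < k" for i
    proof -
      have "(?A *\<^sub>v v) $ i = 0" using v(3) that by simp
      then have "c * (a i * v $ i - s) = 0"
        using scaled_diag_minus_ones_mult_vec_nth[OF v(1) that] by (simp add: s_def)
      then show ?thesis using c a[OF that] by (simp add: field_simps)
    qed
    have "s \<noteq> 0"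
    proof
      assume "s = 0"
      then have "v = 0\<^sub>v k" using v(1) v_nth by (intro eq_vecI) auto
      with v(2) show False by simp
    qed
    have "s = (\<Sum>j<k. v $ j)" by (simp add: s_def)
    also have "\<dots> = (\<Sum>j<k. s / a j)" by (rule sum.cong) (simp_all add: v_nth)
    also have "\<dots> = s * (\<Sum>j<k. 1 / a j)" by (simp add: sum_distrib_left)
    finally show "(\<Sum>i<k. 1 / a i) = 1" using \<open>s \<noteq> 0\<close> by simp
  next
    assume sum_inv: "(\<Sum>i<k. 1 / a i) = 1"
    then have "k > 0" by (cases k) auto
    define v where "v = vec k (\<lambda>i. 1 / a i)"
    have "v \<in> carrier_vec k" by (simp add: v_def)
    moreover have "v \<noteq> 0\<^sub>v k"
    proof
      assume "v = 0\<^sub>v k"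
      then have "v $ 0 = 0" using \<open>k > 0\<close> by simp
      then show False using a[OF \<open>k > 0\<close>] \<open>k > 0\<close> by (simp add: v_def)
    qed
    moreover have "?A *\<^sub>v v = 0\<^sub>v k"
    proof (rule eq_vecI)
      fix i assume "i < dim_vec (0\<^sub>v k :: 'a vec)"
      then have i: "i < k" by simp
      have "(\<Sum>j<k. v $ j) = 1" using sum_inv by (simp add: v_def)
      then show "(?A *\<^sub>v v) $ i = 0\<^sub>v k $ i"
        using scaled_diag_minus_ones_mult_vec_nth[OF \<open>v \<in> carrier_vec k\<close> i] a[OF i] i
        by (simp add: v_def)
    qed simp
    ultimately show "\<exists>v. v \<in> carrier_vec k \<and> v \<noteq> 0\<^sub>v k \<and> ?A *\<^sub>v v = 0\<^sub>v k" by blast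
  qed
qed

lemma finite_young_diagram: "finite (young_diagram lam)"
proof (rule finite_subset)
  show "young_diagram lam \<subseteq> (SIGMA i:{..<length lam}. {..<lam ! i})"
    by (auto simp: young_diagram_def)
qed auto

lemma finite_ssyt: "finite (ssyt d lam)"
proof (rule finite_subset)
  show "ssyt d lam \<subseteq> {T. \<forall>c. (c \<in> young_diagram lam \<longrightarrow> T c \<in> {..d}) \<and>
                                (c \<notin> young_diagram lam \<longrightarrow> T c = 0)}"
    by (auto simp: ssyt_def)
  show "finite \<dots>"
    by (rule finite_set_of_finite_funs) (auto simp: finite_young_diagram)
qed

lemma mult_m_pos:
  assumes "is_partition lam" "length lam \<le> d"
  shows "mult_m d lam > 0"
proof -
  define T where "T = (\<lambda>(i, j). if (i, j) \<in> young_diagram lam then Suc i else 0)"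
  have "lam ! Suc i \<le> lam ! i" if "Suc i < length lam" for i
    using assms(1) that by (simp add: is_partition_def sorted_wrt_iff_nth_less)
  then have "T \<in> ssyt d lam"
    using assms(2) by (auto simp: ssyt_def T_def young_diagram_def)
  then show ?thesis
    unfolding mult_m_def using finite_ssyt by (auto simp: card_gt_0_iff)
qed

lemma length_le_if_box_removal:
  assumes "\<alpha> \<in> box_removals \<mu>"
  shows "length \<alpha> \<le> length \<mu>"
proof (cases "length \<alpha>")
  case (Suc n)
  then have "(n, 0) \<in> young_diagram \<alpha>"
    using assms by (auto simp: box_removals_def is_partition_def young_diagram_def)
  then have "(n, 0) \<in> young_diagram \<mu>" using assms by (auto simp: box_removals_def)
  then show ?thesis using Suc by (simp add: young_diagram_def)
qed simp

theorem corollary30: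
  fixes d p :: nat and \<mu> :: "nat list" and \<alpha>s :: "nat list list"
  assumes "d \<ge> 2"
    and "is_partition \<mu>" and "sum_list \<mu> = p" and "length \<mu> \<le> d"
    and "distinct \<alpha>s" and "set \<alpha>s = box_removals \<mu>"
  shows "det (mat (length \<alpha>s) (length \<alpha>s) (\<lambda>(i, j).
            real (mult_m d \<mu>) / (real d * (real d ^ 2 - 1)) *
            (real d * (real (mult_m d \<mu>) / real (mult_m d (\<alpha>s ! i))) *
               (if i = j then 1 else 0) - 1))) = 0
         \<longleftrightarrow> real d * real (mult_m d \<mu>) = (\<Sum>i<length \<alpha>s. real (mult_m d (\<alpha>s ! i)))"
proof -
  let ?m = "real (mult_m d \<mu>)" and ?m\<alpha> = "\<lambda>i. real (mult_m d (\<alpha>s ! i))"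
  have m_pos: "?m > 0" using mult_m_pos[OF assms(2,4)] by simp
  have m\<alpha>_pos: "?m\<alpha> i > 0" if "i < length \<alpha>s" for i
  proof -
    have "\<alpha>s ! i \<in> box_removals \<mu>" using assms(6) that nth_mem by blast
    then show ?thesis
      using mult_m_pos length_le_if_box_removal assms(4)
      by (fastforce simp: box_removals_def)
  qed
  have "(2::real) ^ 2 \<le> real d ^ 2" using assms(1) by (intro power_mono) auto
  then have "?m / (real d * (real d ^ 2 - 1)) \<noteq> 0" using m_pos assms(1) by simp
  then have "det (mat (length \<alpha>s) (length \<alpha>s) (\<lambda>(i, j).
            ?m / (real d * (real d ^ 2 - 1)) *
            (real d * (?m / ?m\<alpha> i) * (if i = j then 1 else 0) - 1))) = 0
        \<longleftrightarrow> (\<Sum>i<length \<alpha>s. 1 / (real d * (?m / ?m\<alpha> i))) = 1"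
    using m_pos m\<alpha>_pos assms(1) by (intro det_scaled_diag_minus_ones_eq_0_iff) auto
  also have "\<dots> \<longleftrightarrow> (\<Sum>i<length \<alpha>s. ?m\<alpha> i) / (real d * ?m) = 1"
    by (simp add: sum_divide_distrib)
  also have "\<dots> \<longleftrightarrow> real d * ?m = (\<Sum>i<length \<alpha>s. ?m\<alpha> i)"
    using m_pos assms(1) by (auto simp: field_simps)
  finally show ?thesis .
qed

end
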